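(* Let $T:X\to X$ be a continuous map on a Hausdorff topological space $X$. The following are equivalent: (i) $T$ is quasi-rigid; (ii) $T$ is $\mathcal{F}(A)$-recurrent for some infinite set $A\subset\mathbb{N}_0$; (iii) $T$ is $\mathcal{F}$-recurrent for some Furstenberg family $\mathcal{F}$ which is a filter and has a countable base (i.e. there are $A_k\in\mathcal{F}$, $k\in\mathbb{N}$, such that every member of $\mathcal{F}$ contains some $A_k$). If moreover $X$ is second-countable, these are also equivalent to: (iv) $T$ is $\mathcal{F}$-recurrent for some Furstenberg family $\mathcal{F}$ with the finite intersection property.
   Context: A Furstenberg family is a collection $\mathcal{F}$ of subsets of $\mathbb{N}_0$ such that every $A\in\mathcal{F}$ is infinite, $B\in\mathcal{F}$ whenever $A\in\mathcal{F}$ and $A\subset B$, and $A\cap[n,\infty)\in\mathcal{F}$ for all $A\in\mathcal{F}$, $n\in\mathbb{N}$. $\mathcal{F}$ is a filter if it is hereditarily upward and $A\cap B\in\mathcal{F}$ for all $A,B\in\mathcal{F}$; it has the finite intersection property if every finite subcollection has non-empty intersection. For infinite $A\subset\mathbb{N}_0$, $\mathcal{F}(A)=\{B\subset\mathbb{N}_0:A\setminus B \text{ is finite}\}$. For $x\in X$ and $U\subset X$, $N(x,U)=\{n\in\mathbb{N}_0:T^nx\in U\}$. A point $x$ is $\mathcal{F}$-recurrent if $N(x,U)\in\mathcal{F}$ for every neighbourhood $U$ of $x$; $T$ is $\mathcal{F}$-recurrent if the set of $\mathcal{F}$-recurrent points is dense. $T$ is quasi-rigid if there exist a strictly increasing sequence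 $(n_k)$ of positive integers and a dense $Y\subset X$ with $T^{n_k}x\to x$ for every $x\in Y$. *)

theory Defs
  imports "HOL-Analysis.Analysis"
begin

definition furstenberg_family :: "nat set set \<Rightarrow> bool" where
  "furstenberg_family F \<longleftrightarrow>
     (\<forall>A\<in>F. infinite A) \<and>
     (\<forall>A B. A \<in> F \<and> A \<subseteq> B \<longrightarrow> B \<in> F) \<and>
     (\<forall>A\<in>F. \<forall>n. A \<inter> {n..} \<in> F)"

definition is_filter_family :: "nat set set \<Rightarrow> bool" where
  "is_filter_family F \<longleftrightarrow>
     (\<forall>A B. A \<in> F \<and> A \<subseteq> B \<longrightarrow> B \<in> F) \<and>
     (\<forall>A\<in>F. \<forall>B\<in>F. A \<inter> B \<in> F)"

definition has_fip :: "nat set set \<Rightarrow> bool" where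
  "has_fip F \<longleftrightarrow> (\<forall>G. G \<subseteq> F \<and> finite G \<longrightarrow> \<Inter>G \<noteq> {})"

definition has_countable_base :: "nat set set \<Rightarrow> bool" where
  "has_countable_base F \<longleftrightarrow>
     (\<exists>Ak :: nat \<Rightarrow> nat set. (\<forall>k. Ak k \<in> F) \<and> (\<forall>B\<in>F. \<exists>k. Ak k \<subseteq> B))"

definition cofinite_family :: "nat set \<Rightarrow> nat set set" where
  "cofinite_family A = {B. finite (A - B)}"

definition return_set :: "('a \<Rightarrow> 'a) \<Rightarrow> 'a \<Rightarrow> 'a set \<Rightarrow> nat set" where
  "return_set T x U = {n. (T ^^ n) x \<in> U}"

definition F_recurrent_point :: "'a topology \<Rightarrow> ('a \<Rightarrow> 'a) \<Rightarrow> nat set set \<Rightarrow> 'a \<Rightarrow> bool" where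
  "F_recurrent_point X T F x \<longleftrightarrow>
     (\<forall>U. U \<subseteq> topspace X \<and> (\<exists>V. openin X V \<and> x \<in> V \<and> V \<subseteq> U) \<longrightarrow> return_set T x U \<in> F)"

definition F_recurrent :: "'a topology \<Rightarrow> ('a \<Rightarrow> 'a) \<Rightarrow> nat set set \<Rightarrow> bool" where
  "F_recurrent X T F \<longleftrightarrow>
     X closure_of {x \<in> topspace X. F_recurrent_point X T F x} = topspace X"

definition quasi_rigid :: "'a topology \<Rightarrow> ('a \<Rightarrow> 'a) \<Rightarrow> bool" where
  "quasi_rigid X T \<longleftrightarrow>
     (\<exists>(n :: nat \<Rightarrow> nat) Y. strict_mono n \<and> (\<forall>k. 0 < n k) \<and>
        Y \<subseteq> topspace X \<and> X closure_of Y = topspace X \<and>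
        (\<forall>x\<in>Y. limitin X (\<lambda>k. (T ^^ n k) x) x sequentially))"

end

theory Submission
  imports Defs
begin

text \<open>If \<open>T^(n\<^sub>k) x \<rightarrow> x\<close> on a dense set, each of its points is \<open>\<F>(A)\<close>-recurrent for \<open>A = {n\<^sub>k}\<close>;
  \<open>\<F>(A)\<close> is a filter with countable base \<open>A \<inter> [k,\<infinity>)\<close>, and a filter of infinite sets has the
  finite intersection property. Conversely, for countably many members of a Furstenberg family
  with the finite intersection property all finite intersections are infinite, so a diagonal choice
  \<open>n\<^sub>1 < n\<^sub>2 < \<dots>\<close>, with \<open>n\<^sub>k\<close> in the intersection of the first \<open>k\<close> sets, eventually lies in each
  of them. Applied to a countable filter base this gives \<open>T^(n\<^sub>k) x \<rightarrow> x\<close> at every recurrent point;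
  in a second countable space it is applied to the return sets \<open>N(y, V)\<close> with \<open>y\<close> in a countable
  dense set of recurrent points and \<open>V\<close> in a countable base.\<close>

lemma closure_of_eq_topspace_mono:
  assumes "S \<subseteq> S'" "S' \<subseteq> topspace X" "X closure_of S = topspace X"
  shows "X closure_of S' = topspace X"
  by (metis assms closure_of_mono closure_of_subset_topspace subset_antisym)

lemma quasi_rigidI:
  assumes "strict_mono n" "\<And>k. 0 < n k" "Y \<subseteq> topspace X" "X closure_of Y = topspace X"
    and "\<And>x. x \<in> Y \<Longrightarrow> limitin X (\<lambda>k. (T ^^ n k) x) x sequentially"
  shows "quasi_rigid X T"
  unfolding quasi_rigid_def using assms by blast

lemma F_recurrent_point_cofinite_family:
  assumes "inj n" and lim: "limitin X (\<lambda>k. (T ^^ n k) x) x sequentially"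
  shows "F_recurrent_point X T (cofinite_family (range n)) x"
  unfolding F_recurrent_point_def
proof clarify
  fix U V assume "openin X V" "x \<in> V" "V \<subseteq> U"
  then have "\<forall>\<^sub>F k in sequentially. (T ^^ n k) x \<in> V"
    using lim unfolding limitin_def by blast
  then have "\<forall>\<^sub>F k in sequentially. (T ^^ n k) x \<in> U"
    using \<open>V \<subseteq> U\<close> by (auto elim: eventually_mono)
  then obtain K where "\<forall>k\<ge>K. (T ^^ n k) x \<in> U"
    unfolding eventually_sequentially by blast
  then have "{k. n k \<notin> return_set T x U} \<subseteq> {..<K}"
    by (auto simp: return_set_def) (meson not_le)
  then have "finite (n ` {k. n k \<notin> return_set T x U})"
    using finite_subset by blast
  moreover have "range n - return_set T x U = n ` {k. n k \<notin> return_set T x U}"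
    by blast
  ultimately show "return_set T x U \<in> cofinite_family (range n)"
    by (simp add: cofinite_family_def)
qed

lemma quasi_rigid_imp_F_recurrent_cofinite_family:
  assumes "quasi_rigid X T"
  shows "\<exists>A. infinite A \<and> F_recurrent X T (cofinite_family A)"
proof -
  obtain n Y where n: "strict_mono n" and Y: "Y \<subseteq> topspace X" "X closure_of Y = topspace X"
    and lim: "\<forall>x\<in>Y. limitin X (\<lambda>k. (T ^^ n k) x) x sequentially"
    using assms unfolding quasi_rigid_def by blast
  have "inj n"
    using n by (rule strict_mono_imp_inj_on)
  then have "Y \<subseteq> {x \<in> topspace X. F_recurrent_point X T (cofinite_family (range n)) x}"
    using Y(1) lim by (auto intro: F_recurrent_point_cofinite_family)
  then have "F_recurrent X T (cofinite_family (range n))"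
    unfolding F_recurrent_def by (rule closure_of_eq_topspace_mono[OF _ _ Y(2)]) blast
  moreover have "infinite (range n)"
    using \<open>inj n\<close> by (simp add: range_inj_infinite)
  ultimately show ?thesis
    by blast
qed

lemma furstenberg_family_cofinite_family:
  assumes "infinite A"
  shows "furstenberg_family (cofinite_family A)"
proof -
  have "infinite B" if "finite (A - B)" for B
    using assms that finite_Diff2 by blast
  moreover have "finite (A - C)" if "finite (A - B)" "B \<subseteq> C" for B C
    using that by (meson Diff_mono finite_subset order_refl)
  moreover have "finite (A - B \<inter> {n..})" if "finite (A - B)" for B n
  proof -
    have "A - B \<inter> {n..} \<subseteq> (A - B) \<union> {..<n}"
      by auto
    then show ?thesis
      using that finite_subset by blast
  qed
  ultimately show ?thesis
    unfolding furstenberg_family_def cofinite_family_def by blast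
qed

lemma is_filter_family_cofinite_family: "is_filter_family (cofinite_family A)"
  unfolding is_filter_family_def cofinite_family_def
  by (auto simp: Diff_Int intro: finite_subset[rotated])

lemma has_countable_base_cofinite_family: "has_countable_base (cofinite_family A)"
  unfolding has_countable_base_def
proof (intro exI[of _ "\<lambda>k. A \<inter> {k..}"] conjI allI ballI)
  fix k
  have "A - A \<inter> {k..} \<subseteq> {..<k}"
    by auto
  then show "A \<inter> {k..} \<in> cofinite_family A"
    unfolding cofinite_family_def by (auto intro: finite_subset)
next
  fix B assume "B \<in> cofinite_family A"
  then obtain k where "A - B \<subseteq> {..<k}"
    unfolding cofinite_family_def using finite_nat_bounded by blast
  then show "\<exists>k. A \<inter> {k..} \<subseteq> B"
    by (intro exI[of _ k]) auto
qed

lemma has_fip_if_filter_family: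
  assumes "furstenberg_family F" "is_filter_family F"
  shows "has_fip F"
  unfolding has_fip_def
proof clarify
  fix G assume G: "G \<subseteq> F" "finite G" "\<Inter>G = {}"
  have "\<Inter>G \<in> F" if "G \<noteq> {}"
    using G(2) that G(1)
  proof (induction G rule: finite_ne_induct)
    case (insert C G)
    then show ?case
      using assms(2) unfolding is_filter_family_def by auto
  qed simp
  then show False
    using G(3) assms(1) unfolding furstenberg_family_def by fastforce
qed

lemma infinite_Inter_if_has_fip:
  assumes F: "furstenberg_family F" "has_fip F" and G: "G \<subseteq> F" "finite G"
  shows "infinite (\<Inter>G)"
proof (cases "G = {}")
  case False
  have "\<exists>m\<in>\<Inter>G. lo \<le> m" for lo
  proof -
    have "(\<lambda>C. C \<inter> {lo..}) ` G \<subseteq> F"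
      using F(1) G(1) unfolding furstenberg_family_def by blast
    then have "\<Inter>((\<lambda>C. C \<inter> {lo..}) ` G) \<noteq> {}"
      using F(2) G(2) unfolding has_fip_def by blast
    then show ?thesis
      using False by auto
  qed
  then show ?thesis
    unfolding infinite_nat_iff_unbounded_le by blast
qed simp

lemma strict_mono_selection:
  fixes S :: "nat \<Rightarrow> nat set"
  assumes "\<And>k. infinite (S k)"
  shows "\<exists>n. strict_mono n \<and> (\<forall>k. 0 < n k \<and> n k \<in> S k)"
proof -
  have above: "\<exists>m. lo < m \<and> m \<in> S k" for k lo
    using assms[of k] by (simp add: infinite_nat_iff_unbounded)
  have "\<exists>n. \<forall>k. (0 < n k \<and> n k \<in> S k) \<and> n k < n (Suc k)"
  proof (rule dependent_nat_choice)
    show "\<exists>m. 0 < m \<and> m \<in> S 0"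
      using above[of 0 0] by blast
    fix m k
    show "\<exists>m'. (0 < m' \<and> m' \<in> S (Suc k)) \<and> m < m'"
      using above[of m "Suc k"] by (metis gr0I less_nat_zero_code)
  qed
  then obtain n where n: "\<forall>k. (0 < n k \<and> n k \<in> S k) \<and> n k < n (Suc k)"
    by blast
  then have "strict_mono n"
    by (simp add: strict_mono_Suc_iff)
  with n show ?thesis
    by blast
qed

lemma strict_mono_eventually_in_countable_family:
  fixes \<C> :: "nat set set"
  assumes "countable \<C>" and fin_Inter: "\<And>G. G \<subseteq> \<C> \<Longrightarrow> finite G \<Longrightarrow> infinite (\<Inter>G)"
  shows "\<exists>n. strict_mono n \<and> (\<forall>k. 0 < n k) \<and> (\<forall>C\<in>\<C>. \<forall>\<^sub>F k in sequentially. n k \<in> C)"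
proof (cases "\<C> = {}")
  case True
  then have "strict_mono Suc \<and> (\<forall>k. 0 < Suc k) \<and> (\<forall>C\<in>\<C>. \<forall>\<^sub>F k in sequentially. Suc k \<in> C)"
    by (simp add: strict_mono_Suc_iff)
  then show ?thesis
    by blast
next
  case False
  define c where "c = from_nat_into \<C>"
  have c: "c k \<in> \<C>" for k
    using False by (simp add: c_def from_nat_into)
  have "infinite (\<Inter>(c ` {..k}))" for k
    by (rule fin_Inter) (use c in auto)
  then obtain n where n: "strict_mono n" "\<forall>k. 0 < n k \<and> n k \<in> \<Inter>(c ` {..k})"
    using strict_mono_selection[of "\<lambda>k. \<Inter>(c ` {..k})"] by blast
  have ev: "\<forall>\<^sub>F k in sequentially. n k \<in> c j" for j
    unfolding eventually_sequentially using n(2) by (intro exI[of _ j]) auto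
  have "\<forall>C\<in>\<C>. \<forall>\<^sub>F k in sequentially. n k \<in> C"
  proof
    fix C assume "C \<in> \<C>"
    then obtain j where "C = c j"
      using \<open>countable \<C>\<close> from_nat_into_surj unfolding c_def by metis
    then show "\<forall>\<^sub>F k in sequentially. n k \<in> C"
      using ev by blast
  qed
  then show ?thesis
    using n by blast
qed

lemma limitin_iterates_if_F_recurrent_point:
  assumes "F_recurrent_point X T F x" "x \<in> topspace X"
    and "\<forall>C\<in>F. \<forall>\<^sub>F k in sequentially. n k \<in> C"
  shows "limitin X (\<lambda>k. (T ^^ n k) x) x sequentially"
  unfolding limitin_def
proof (intro conjI allI impI)
  fix U assume "openin X U \<and> x \<in> U"
  then have "return_set T x U \<in> F"
    using assms(1) openin_subset unfolding F_recurrent_point_def by blast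
  then show "\<forall>\<^sub>F k in sequentially. (T ^^ n k) x \<in> U"
    using assms(3) by (auto simp: return_set_def)
qed (fact assms(2))

lemma quasi_rigid_if_filter_family:
  assumes "furstenberg_family F" "is_filter_family F" "has_countable_base F"
    and rec: "F_recurrent X T F"
  shows "quasi_rigid X T"
proof -
  obtain Ak :: "nat \<Rightarrow> nat set" where Ak: "range Ak \<subseteq> F" "\<forall>B\<in>F. \<exists>k. Ak k \<subseteq> B"
    using assms(3) unfolding has_countable_base_def by blast
  have "has_fip F"
    using assms(1,2) by (rule has_fip_if_filter_family)
  then have "infinite (\<Inter>G)" if "G \<subseteq> range Ak" "finite G" for G
    using infinite_Inter_if_has_fip[OF assms(1)] that Ak(1) by blast
  then obtain n where n: "strict_mono n" "\<forall>k. 0 < n k"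
    and ev: "\<forall>C\<in>range Ak. \<forall>\<^sub>F k in sequentially. n k \<in> C"
    using strict_mono_eventually_in_countable_family[of "range Ak"] by blast
  have "\<forall>C\<in>F. \<forall>\<^sub>F k in sequentially. n k \<in> C"
  proof
    fix C assume "C \<in> F"
    then obtain j where "Ak j \<subseteq> C"
      using Ak(2) by blast
    moreover have "\<forall>\<^sub>F k in sequentially. n k \<in> Ak j"
      using ev by blast
    ultimately show "\<forall>\<^sub>F k in sequentially. n k \<in> C"
      by (auto elim: eventually_mono)
  qed
  then show ?thesis
    using n rec[unfolded F_recurrent_def]
    by (intro quasi_rigidI[of n "{x \<in> topspace X. F_recurrent_point X T F x}"])
      (auto intro: limitin_iterates_if_F_recurrent_point)
qed

lemma countable_dense_subset:
  assumes "second_countable X" "X closure_of R = topspace X" "R \<subseteq> topspace X"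
  obtains D where "countable D" "D \<subseteq> R" "X closure_of D = topspace X"
proof -
  have "separable_space (subtopology X R)"
    by (intro second_countable_imp_separable_space second_countable_subtopology assms(1))
  moreover have "topspace (subtopology X R) = R"
    using assms(3) by auto
  ultimately obtain D where D: "countable D" "D \<subseteq> R" "(subtopology X R) closure_of D = R"
    unfolding separable_space_def by auto
  have "R \<subseteq> X closure_of (R \<inter> D)"
    using D(3) closure_of_subtopology[of X R D] by blast
  also have "\<dots> \<subseteq> X closure_of D"
    by (rule closure_of_mono) blast
  finally have "X closure_of R \<subseteq> X closure_of D"
    by (rule closure_of_minimal) simp
  then have "X closure_of D = topspace X"
    using assms(2) closure_of_subset_topspace[of X D] by simp
  with D(1,2) show ?thesis
    by (rule that)
qed

lemma quasi_rigid_if_has_fip: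
  assumes "second_countable X" "furstenberg_family F" "has_fip F" and rec: "F_recurrent X T F"
  shows "quasi_rigid X T"
proof -
  obtain \<B> where \<B>: "countable \<B>" "\<forall>V\<in>\<B>. openin X V"
    "\<forall>U x. openin X U \<and> x \<in> U \<longrightarrow> (\<exists>V\<in>\<B>. x \<in> V \<and> V \<subseteq> U)"
    using assms(1) unfolding second_countable_def by blast
  obtain D where D: "countable D" "D \<subseteq> {x \<in> topspace X. F_recurrent_point X T F x}"
    "X closure_of D = topspace X"
    using countable_dense_subset[OF assms(1) rec[unfolded F_recurrent_def]] by blast
  define \<C> where "\<C> = (\<lambda>(y, V). return_set T y V) ` (SIGMA y:D. {V \<in> \<B>. y \<in> V})"
  have "countable \<C>"
    unfolding \<C>_def using D(1) \<B>(1) by (intro countable_image countable_SIGMA) auto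
  moreover have "return_set T y V \<in> F" if "y \<in> D" "V \<in> \<B>" "y \<in> V" for y V
  proof -
    have "F_recurrent_point X T F y"
      using D(2) that(1) by blast
    then show ?thesis
      unfolding F_recurrent_point_def using \<B>(2) that(2,3) openin_subset by blast
  qed
  then have "\<C> \<subseteq> F"
    unfolding \<C>_def by auto
  then have "infinite (\<Inter>G)" if "G \<subseteq> \<C>" "finite G" for G
    using infinite_Inter_if_has_fip[OF assms(2,3)] that by blast
  ultimately obtain n where n: "strict_mono n" "\<forall>k. 0 < n k"
    and ev: "\<forall>C\<in>\<C>. \<forall>\<^sub>F k in sequentially. n k \<in> C"
    using strict_mono_eventually_in_countable_family[of \<C>] by blast
  have "limitin X (\<lambda>k. (T ^^ n k) x) x sequentially" if "x \<in> D" for x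
    unfolding limitin_def
  proof (intro conjI allI impI)
    fix U assume "openin X U \<and> x \<in> U"
    then obtain V where "V \<in> \<B>" "x \<in> V" "V \<subseteq> U"
      using \<B>(3) by blast
    then have "return_set T x V \<in> \<C>"
      using that unfolding \<C>_def by force
    then have "\<forall>\<^sub>F k in sequentially. n k \<in> return_set T x V"
      using ev by blast
    then show "\<forall>\<^sub>F k in sequentially. (T ^^ n k) x \<in> U"
      using \<open>V \<subseteq> U\<close> by (auto simp: return_set_def elim: eventually_mono)
  qed (use that D(2) in auto)
  then show ?thesis
    using n D(2,3) by (intro quasi_rigidI[of n D]) auto
qed

theorem mainTheorem9:
  fixes X :: "'a topology" and T :: "'a \<Rightarrow> 'a"
  assumes "Hausdorff_space X" and "continuous_map X X T"
  shows "(quasi_rigid X T \<longleftrightarrow> (\<exists>A. infinite A \<and> F_recurrent X T (cofinite_family A)))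
       \<and> (quasi_rigid X T \<longleftrightarrow> (\<exists>F. furstenberg_family F \<and> is_filter_family F \<and>
                                  has_countable_base F \<and> F_recurrent X T F))
       \<and> (second_countable X \<longrightarrow>
            (quasi_rigid X T \<longleftrightarrow> (\<exists>F. furstenberg_family F \<and> has_fip F \<and> F_recurrent X T F)))"
proof (intro conjI impI)
  have cofinite_imp_filter: "\<exists>F. furstenberg_family F \<and> is_filter_family F \<and>
      has_countable_base F \<and> F_recurrent X T F"
    if "infinite A" "F_recurrent X T (cofinite_family A)" for A
    using that furstenberg_family_cofinite_family is_filter_family_cofinite_family
      has_countable_base_cofinite_family by blast
  then show filter: "quasi_rigid X T \<longleftrightarrow> (\<exists>F. furstenberg_family F \<and> is_filter_family F \<and>
      has_countable_base F \<and> F_recurrent X T F)"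
    using quasi_rigid_imp_F_recurrent_cofinite_family quasi_rigid_if_filter_family by blast
  then show "quasi_rigid X T \<longleftrightarrow> (\<exists>A. infinite A \<and> F_recurrent X T (cofinite_family A))"
    using quasi_rigid_imp_F_recurrent_cofinite_family cofinite_imp_filter by blast
  assume "second_countable X"
  then show "quasi_rigid X T \<longleftrightarrow> (\<exists>F. furstenberg_family F \<and> has_fip F \<and> F_recurrent X T F)"
    using filter has_fip_if_filter_family quasi_rigid_if_has_fip by blast
qed

end
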